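(* Let $k\ge1$, let $(A,t)$ be a $\mathcal{C}_k$-algebra and let $K(A)=\{x\in A: t(x)=x=\nabla x\}$. Then: (a) $K(A)$ is a subalgebra of the $mpM$-algebra $A$ (closed under $\wedge,\vee,\sim,{}^\ast,0,1$); (b) $K(A)$ is a Boolean algebra; (c) if $(S,t_S)$ is a $\mathcal{C}_k$-subalgebra of $(A,t)$, then $K(S)=K(A)\cap S$; (d) for $a\in A$, the principal lattice filter $[a)$ is a $c$-filter if and only if $a\in K(A)$; (e) if $a\in K(A)$, then $D(a)=[a)$.
   Context: A modal pseudocomplemented De Morgan algebra ($mpM$-algebra) is an algebra $\langle A,\wedge,\vee,\sim,{}^\ast,0,1\rangle$ such that $\langle A,\wedge,\vee,\sim,0,1\rangle$ is a De Morgan algebra (bounded distributive lattice with $\sim\sim x=x$, $\sim(x\vee y)=\sim x\wedge\sim y$), $x^\ast$ is the pseudocomplement of $x$, and $x\vee\sim x\le x\vee x^\ast$. Put $\nabla x=\sim(\sim x\wedge x^\ast)$, $\triangle x=\sim\nabla\sim x$. A $\mathcal{C}_k$-algebra ($k\ge1$) is a pair $(A,t)$ with $A$ an $mpM$-algebra and $t$ an $mpM$-automorphism of $A$ with $t^k=\mathrm{id}$. A $c$-filter is a lattice filter $F$ with $x\in F\Rightarrow\triangle x\in F$ and $t(x)\in F$. The cyclic implication is $a\rightharpoondown b=\bigvee_{i=1}^{k}\nabla(\sim t^i(a))\vee b$; a cyclic deductive system is a set $D\ni 1$ such that $x,\,x\rightharpoondown y\in D$ imply $y\in D$; $D(a)$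 is the smallest cyclic deductive system containing $a$. *)

theory Defs
  imports Main
begin

text \<open>An algebra of type (2,2,1,1,0,0): carrier with meet, join, De Morgan negation,
pseudocomplement, bottom and top.\<close>
record 'a mpm =
  carrier :: "'a set"
  meet :: "'a \<Rightarrow> 'a \<Rightarrow> 'a"
  join :: "'a \<Rightarrow> 'a \<Rightarrow> 'a"
  neg  :: "'a \<Rightarrow> 'a"
  pc   :: "'a \<Rightarrow> 'a"
  zero :: 'a
  one  :: 'a

definition le :: "'a mpm \<Rightarrow> 'a \<Rightarrow> 'a \<Rightarrow> bool" where
  "le M x y \<longleftrightarrow> meet M x y = x"

definition bdl :: "'a mpm \<Rightarrow> bool" where
  "bdl M \<longleftrightarrow>
     zero M \<in> carrier M \<and> one M \<in> carrier M \<and>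
     (\<forall>x\<in>carrier M. \<forall>y\<in>carrier M. meet M x y \<in> carrier M \<and> join M x y \<in> carrier M) \<and>
     (\<forall>x\<in>carrier M. \<forall>y\<in>carrier M. meet M x y = meet M y x \<and> join M x y = join M y x) \<and>
     (\<forall>x\<in>carrier M. \<forall>y\<in>carrier M. \<forall>z\<in>carrier M.
        meet M (meet M x y) z = meet M x (meet M y z) \<and>
        join M (join M x y) z = join M x (join M y z)) \<and>
     (\<forall>x\<in>carrier M. \<forall>y\<in>carrier M.
        meet M x (join M x y) = x \<and> join M x (meet M x y) = x) \<and>
     (\<forall>x\<in>carrier M. \<forall>y\<in>carrier M. \<forall>z\<in>carrier M.
        meet M x (join M y z) = join M (meet M x y) (meet M x z)) \<and>
     (\<forall>x\<in>carrier M. meet M x (zero M) = zero M \<and> join M x (one M) = one M)"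

definition boolean_alg :: "'a mpm \<Rightarrow> bool" where
  "boolean_alg M \<longleftrightarrow> bdl M \<and>
     (\<forall>x\<in>carrier M. \<exists>y\<in>carrier M. meet M x y = zero M \<and> join M x y = one M)"

definition demorgan_alg :: "'a mpm \<Rightarrow> bool" where
  "demorgan_alg M \<longleftrightarrow> bdl M \<and>
     (\<forall>x\<in>carrier M. neg M x \<in> carrier M \<and> neg M (neg M x) = x) \<and>
     (\<forall>x\<in>carrier M. \<forall>y\<in>carrier M. neg M (join M x y) = meet M (neg M x) (neg M y))"

definition mpm_alg :: "'a mpm \<Rightarrow> bool" where
  "mpm_alg M \<longleftrightarrow> demorgan_alg M \<and>
     (\<forall>x\<in>carrier M. pc M x \<in> carrier M \<and> meet M x (pc M x) = zero M \<and>
        (\<forall>y\<in>carrier M. meet M x y = zero M \<longrightarrow> le M y (pc M x))) \<and>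
     (\<forall>x\<in>carrier M. le M (join M x (neg M x)) (join M x (pc M x)))"

definition nabla :: "'a mpm \<Rightarrow> 'a \<Rightarrow> 'a" where
  "nabla M x = neg M (meet M (neg M x) (pc M x))"

definition triangle :: "'a mpm \<Rightarrow> 'a \<Rightarrow> 'a" where
  "triangle M x = neg M (nabla M (neg M x))"

definition mpm_aut :: "'a mpm \<Rightarrow> ('a \<Rightarrow> 'a) \<Rightarrow> bool" where
  "mpm_aut M t \<longleftrightarrow> bij_betw t (carrier M) (carrier M) \<and>
     (\<forall>x\<in>carrier M. \<forall>y\<in>carrier M.
        t (meet M x y) = meet M (t x) (t y) \<and> t (join M x y) = join M (t x) (t y)) \<and>
     (\<forall>x\<in>carrier M. t (neg M x) = neg M (t x) \<and> t (pc M x) = pc M (t x)) \<and>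
     t (zero M) = zero M \<and> t (one M) = one M"

definition ck_alg :: "nat \<Rightarrow> 'a mpm \<Rightarrow> ('a \<Rightarrow> 'a) \<Rightarrow> bool" where
  "ck_alg k M t \<longleftrightarrow> k \<ge> 1 \<and> mpm_alg M \<and> mpm_aut M t \<and>
     (\<forall>x\<in>carrier M. (t ^^ k) x = x)"

definition Kset :: "'a mpm \<Rightarrow> ('a \<Rightarrow> 'a) \<Rightarrow> 'a set" where
  "Kset M t = {x \<in> carrier M. t x = x \<and> x = nabla M x}"

definition mpm_subalg :: "'a mpm \<Rightarrow> 'a set \<Rightarrow> bool" where
  "mpm_subalg M S \<longleftrightarrow> S \<subseteq> carrier M \<and> zero M \<in> S \<and> one M \<in> S \<and>
     (\<forall>x\<in>S. \<forall>y\<in>S. meet M x y \<in> S \<and> join M x y \<in> S) \<and>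
     (\<forall>x\<in>S. neg M x \<in> S \<and> pc M x \<in> S)"

definition ck_subalg :: "nat \<Rightarrow> 'a mpm \<Rightarrow> ('a \<Rightarrow> 'a) \<Rightarrow> 'a set \<Rightarrow> ('a \<Rightarrow> 'a) \<Rightarrow> bool" where
  "ck_subalg k M t S ts \<longleftrightarrow> mpm_subalg M S \<and> (\<forall>x\<in>S. ts x = t x) \<and>
     ck_alg k (M\<lparr>carrier := S\<rparr>) ts"

definition lattice_filter :: "'a mpm \<Rightarrow> 'a set \<Rightarrow> bool" where
  "lattice_filter M F \<longleftrightarrow> F \<subseteq> carrier M \<and> F \<noteq> {} \<and>
     (\<forall>x\<in>F. \<forall>y\<in>carrier M. le M x y \<longrightarrow> y \<in> F) \<and>
     (\<forall>x\<in>F. \<forall>y\<in>F. meet M x y \<in> F)"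

definition c_filter :: "'a mpm \<Rightarrow> ('a \<Rightarrow> 'a) \<Rightarrow> 'a set \<Rightarrow> bool" where
  "c_filter M t F \<longleftrightarrow> lattice_filter M F \<and>
     (\<forall>x\<in>F. triangle M x \<in> F \<and> t x \<in> F)"

definition princ_filter :: "'a mpm \<Rightarrow> 'a \<Rightarrow> 'a set" where
  "princ_filter M a = {x \<in> carrier M. le M a x}"

definition cimp :: "nat \<Rightarrow> 'a mpm \<Rightarrow> ('a \<Rightarrow> 'a) \<Rightarrow> 'a \<Rightarrow> 'a \<Rightarrow> 'a" where
  "cimp k M t a b = foldr (join M) [nabla M (neg M ((t ^^ i) a)). i \<leftarrow> [1..<Suc k]] b"

definition cds :: "nat \<Rightarrow> 'a mpm \<Rightarrow> ('a \<Rightarrow> 'a) \<Rightarrow> 'a set \<Rightarrow> bool" where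
  "cds k M t D \<longleftrightarrow> D \<subseteq> carrier M \<and> one M \<in> D \<and>
     (\<forall>x\<in>D. \<forall>y\<in>carrier M. cimp k M t x y \<in> D \<longrightarrow> y \<in> D)"

text \<open>D(a): the smallest cyclic deductive system containing a.\<close>
definition Dgen :: "nat \<Rightarrow> 'a mpm \<Rightarrow> ('a \<Rightarrow> 'a) \<Rightarrow> 'a \<Rightarrow> 'a set" where
  "Dgen k M t a = \<Inter> {D. cds k M t D \<and> a \<in> D}"

end

(*
  The fixed points of \<nabla> are exactly the elements x with x \<and> \<sim>x = 0, i.e. the elements
  complemented by \<sim>, and for those x* = \<sim>x. So K(A) consists of the t-fixed Boolean elements,
  which are closed under all operations and complemented inside K(A); (c) holds because the
  operations of a subalgebra are those of A.

  Because t has period k, a \<le> t a forces t a = a via a \<le> t a \<le> ... \<le> t^k a = a; and since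
  \<triangle>a = a \<and> (\<sim>a)*, the condition a \<le> \<triangle>a says that a is Boolean.

  For (e), let a be Boolean and t-fixed. If a \<le> x, then a \<le> \<triangle>(t^i x) = \<sim>\<nabla>(\<sim>t^i x), so a is
  disjoint from every disjunct of x \<rightharpoondown> y and, by distributivity, a \<le> x \<rightharpoondown> y implies a \<le> y:
  [a) is a cyclic deductive system. Conversely a \<rightharpoondown> x contains the disjunct \<nabla>(\<sim>t a) = \<sim>a,
  so a \<le> x gives a \<rightharpoondown> x \<ge> a \<or> \<sim>a = 1, and every cyclic deductive system containing a
  contains x.
*)

theory Submission imports Defs begin

locale bounded_distrib_lattice =
  fixes M :: "'a mpm"
  assumes bdl: "bdl M"
begin

abbreviation meet_syn (infixl "\<sqinter>" 70) where "x \<sqinter> y \<equiv> meet M x y"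
abbreviation join_syn (infixl "\<squnion>" 65) where "x \<squnion> y \<equiv> join M x y"
abbreviation le_syn (infix "\<preceq>" 50) where "x \<preceq> y \<equiv> le M x y"
abbreviation zero_syn ("\<zero>") where "\<zero> \<equiv> zero M"
abbreviation one_syn ("\<one>") where "\<one> \<equiv> one M"

lemma zero_closed [simp]: "\<zero> \<in> carrier M"
  and one_closed [simp]: "\<one> \<in> carrier M"
  using bdl by (auto simp: bdl_def)

lemma meet_closed [simp]: "x \<in> carrier M \<Longrightarrow> y \<in> carrier M \<Longrightarrow> x \<sqinter> y \<in> carrier M"
  and join_closed [simp]: "x \<in> carrier M \<Longrightarrow> y \<in> carrier M \<Longrightarrow> x \<squnion> y \<in> carrier M"
  and meet_comm: "x \<in> carrier M \<Longrightarrow> y \<in> carrier M \<Longrightarrow> x \<sqinter> y = y \<sqinter> x"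
  and join_comm: "x \<in> carrier M \<Longrightarrow> y \<in> carrier M \<Longrightarrow> x \<squnion> y = y \<squnion> x"
  and meet_join_absorb: "x \<in> carrier M \<Longrightarrow> y \<in> carrier M \<Longrightarrow> x \<sqinter> (x \<squnion> y) = x"
  and join_meet_absorb: "x \<in> carrier M \<Longrightarrow> y \<in> carrier M \<Longrightarrow> x \<squnion> (x \<sqinter> y) = x"
  using bdl unfolding bdl_def by blast+

lemma meet_assoc:
    "x \<in> carrier M \<Longrightarrow> y \<in> carrier M \<Longrightarrow> z \<in> carrier M \<Longrightarrow> x \<sqinter> y \<sqinter> z = x \<sqinter> (y \<sqinter> z)"
  and join_assoc:
    "x \<in> carrier M \<Longrightarrow> y \<in> carrier M \<Longrightarrow> z \<in> carrier M \<Longrightarrow> x \<squnion> y \<squnion> z = x \<squnion> (y \<squnion> z)"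
  and meet_join_distrib:
    "x \<in> carrier M \<Longrightarrow> y \<in> carrier M \<Longrightarrow> z \<in> carrier M \<Longrightarrow> x \<sqinter> (y \<squnion> z) = x \<sqinter> y \<squnion> x \<sqinter> z"
  using bdl unfolding bdl_def by blast+

lemma meet_zero [simp]: "x \<in> carrier M \<Longrightarrow> x \<sqinter> \<zero> = \<zero>"
  and join_one [simp]: "x \<in> carrier M \<Longrightarrow> x \<squnion> \<one> = \<one>"
  using bdl unfolding bdl_def by blast+

lemma meet_idem [simp]: "x \<in> carrier M \<Longrightarrow> x \<sqinter> x = x"
  using meet_join_absorb[of x "x \<sqinter> x"] join_meet_absorb[of x x] by simp

lemma zero_meet [simp]: "x \<in> carrier M \<Longrightarrow> \<zero> \<sqinter> x = \<zero>"
  using meet_comm[of \<zero> x] by simp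

lemma meet_one [simp]: "x \<in> carrier M \<Longrightarrow> x \<sqinter> \<one> = x"
  using meet_join_absorb[of x \<one>] by simp

lemma join_zero [simp]: "x \<in> carrier M \<Longrightarrow> x \<squnion> \<zero> = x"
  using join_meet_absorb[of x \<zero>] by simp

lemma zero_join [simp]: "x \<in> carrier M \<Longrightarrow> \<zero> \<squnion> x = x"
  using join_comm[of \<zero> x] by simp

lemma le_iff_join: "x \<in> carrier M \<Longrightarrow> y \<in> carrier M \<Longrightarrow> x \<preceq> y \<longleftrightarrow> x \<squnion> y = y"
  unfolding le_def by (metis join_comm meet_comm meet_join_absorb join_meet_absorb)

lemma le_refl: "x \<in> carrier M \<Longrightarrow> x \<preceq> x"
  by (simp add: le_def)

lemma le_trans:
  assumes "x \<in> carrier M" "y \<in> carrier M" "z \<in> carrier M" "x \<preceq> y" "y \<preceq> z"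
  shows "x \<preceq> z"
  using assms meet_assoc[of x y z] by (simp add: le_def)

lemma le_antisym: "x \<in> carrier M \<Longrightarrow> y \<in> carrier M \<Longrightarrow> x \<preceq> y \<Longrightarrow> y \<preceq> x \<Longrightarrow> x = y"
  unfolding le_def by (metis meet_comm)

lemma le_one: "x \<in> carrier M \<Longrightarrow> x \<preceq> \<one>"
  by (simp add: le_def)

lemma le_zero_iff: "x \<in> carrier M \<Longrightarrow> x \<preceq> \<zero> \<longleftrightarrow> x = \<zero>"
  by (auto simp: le_def)

lemma meet_le1: "x \<in> carrier M \<Longrightarrow> y \<in> carrier M \<Longrightarrow> x \<sqinter> y \<preceq> x"
  unfolding le_def by (metis meet_assoc meet_comm meet_idem)

lemma meet_le2: "x \<in> carrier M \<Longrightarrow> y \<in> carrier M \<Longrightarrow> x \<sqinter> y \<preceq> y"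
  using meet_le1[of y x] meet_comm[of x y] by simp

lemma le_meetI:
  assumes "x \<in> carrier M" "y \<in> carrier M" "z \<in> carrier M" "z \<preceq> x" "z \<preceq> y"
  shows "z \<preceq> x \<sqinter> y"
  using assms meet_assoc[of z x y] by (simp add: le_def)

lemma join_ge1: "x \<in> carrier M \<Longrightarrow> y \<in> carrier M \<Longrightarrow> x \<preceq> x \<squnion> y"
  by (simp add: le_def meet_join_absorb)

lemma join_ge2: "x \<in> carrier M \<Longrightarrow> y \<in> carrier M \<Longrightarrow> y \<preceq> x \<squnion> y"
  using join_ge1[of y x] join_comm[of x y] by simp

lemma join_leI:
  assumes "x \<in> carrier M" "y \<in> carrier M" "z \<in> carrier M" "x \<preceq> z" "y \<preceq> z"
  shows "x \<squnion> y \<preceq> z"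
  using assms join_assoc[of x y z] by (simp add: le_iff_join)

lemma meet_mono:
  assumes "x \<in> carrier M" "y \<in> carrier M" "z \<in> carrier M" "x \<preceq> y"
  shows "x \<sqinter> z \<preceq> y \<sqinter> z"
  using assms le_trans[OF _ assms(1,2) meet_le1] meet_le2 le_meetI by simp

lemma bdl_restrict_carrier:
  assumes "S \<subseteq> carrier M" "\<zero> \<in> S" "\<one> \<in> S"
    and "\<forall>x\<in>S. \<forall>y\<in>S. x \<sqinter> y \<in> S \<and> x \<squnion> y \<in> S"
  shows "bdl (M\<lparr>carrier := S\<rparr>)"
  using assms unfolding bdl_def
  by (auto simp: subset_iff meet_assoc join_assoc meet_join_distrib
      intro: meet_comm join_comm meet_join_absorb join_meet_absorb)

lemma lattice_filter_princ_filter: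
  assumes "a \<in> carrier M"
  shows "lattice_filter M (princ_filter M a)"
  using assms unfolding lattice_filter_def princ_filter_def
  by (auto intro: le_refl le_meetI dest: le_trans[OF assms])

lemma foldr_join_closed: "set xs \<subseteq> carrier M \<Longrightarrow> y \<in> carrier M \<Longrightarrow> foldr (join M) xs y \<in> carrier M"
  by (induction xs) auto

lemma le_foldr_join_base: "set xs \<subseteq> carrier M \<Longrightarrow> y \<in> carrier M \<Longrightarrow> y \<preceq> foldr (join M) xs y"
proof (induction xs)
  case (Cons e xs)
  then show ?case
    using le_trans[OF _ _ _ _ join_ge2] foldr_join_closed by (simp add: le_refl)
qed (simp add: le_refl)

lemma le_foldr_join_elem:
  "set xs \<subseteq> carrier M \<Longrightarrow> y \<in> carrier M \<Longrightarrow> e \<in> set xs \<Longrightarrow> e \<preceq> foldr (join M) xs y"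
proof (induction xs)
  case (Cons e' xs)
  then have "e \<in> carrier M" "e' \<in> carrier M" "foldr (join M) xs y \<in> carrier M"
    using foldr_join_closed by auto
  with Cons show ?case
    using le_trans[OF _ _ _ _ join_ge2] join_ge1 by auto
qed simp

lemma le_foldr_join_disjointD:
  assumes "set xs \<subseteq> carrier M" "y \<in> carrier M" "a \<in> carrier M"
    and "\<forall>e\<in>set xs. a \<sqinter> e = \<zero>" "a \<preceq> foldr (join M) xs y"
  shows "a \<preceq> y"
  using assms
proof (induction xs)
  case (Cons e xs)
  let ?r = "foldr (join M) xs y"
  have "a = a \<sqinter> (e \<squnion> ?r)"
    using Cons.prems by (simp add: le_def)
  also have "\<dots> = a \<sqinter> ?r"
    using Cons.prems foldr_join_closed meet_join_distrib by simp
  finally show ?case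
    using Cons by (simp add: le_def)
qed simp

end

locale de_morgan_algebra =
  fixes M :: "'a mpm"
  assumes de_morgan: "demorgan_alg M"

sublocale de_morgan_algebra \<subseteq> bounded_distrib_lattice
  using de_morgan by unfold_locales (simp add: demorgan_alg_def)

context de_morgan_algebra
begin

abbreviation neg_syn ("\<sim>_" [80] 80) where "\<sim>x \<equiv> neg M x"

lemma neg_closed [simp]: "x \<in> carrier M \<Longrightarrow> \<sim>x \<in> carrier M"
  and neg_neg [simp]: "x \<in> carrier M \<Longrightarrow> \<sim>\<sim>x = x"
  and neg_join: "x \<in> carrier M \<Longrightarrow> y \<in> carrier M \<Longrightarrow> \<sim>(x \<squnion> y) = \<sim>x \<sqinter> \<sim>y"
  using de_morgan unfolding demorgan_alg_def by blast+

lemma neg_meet: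
  assumes "x \<in> carrier M" "y \<in> carrier M"
  shows "\<sim>(x \<sqinter> y) = \<sim>x \<squnion> \<sim>y"
proof -
  have "\<sim>(\<sim>x \<squnion> \<sim>y) = x \<sqinter> y"
    using assms by (simp add: neg_join)
  then show ?thesis
    using assms by (metis join_closed neg_closed neg_neg)
qed

lemma neg_one [simp]: "\<sim>\<one> = \<zero>"
  using neg_join[of "\<sim>\<zero>" \<one>] by simp

lemma neg_zero [simp]: "\<sim>\<zero> = \<one>"
  using neg_neg[of \<one>] by simp

lemma neg_antimono:
  assumes "x \<in> carrier M" "y \<in> carrier M" "x \<preceq> y"
  shows "\<sim>y \<preceq> \<sim>x"
proof -
  have "\<sim>x = \<sim>(x \<sqinter> y)"
    using assms(3) by (simp add: le_def)
  also have "\<dots> = \<sim>x \<squnion> \<sim>y"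
    using assms(1,2) by (rule neg_meet)
  finally have "\<sim>x = \<sim>x \<squnion> \<sim>y" .
  then show ?thesis
    using assms join_comm[of "\<sim>x" "\<sim>y"] by (simp add: le_iff_join)
qed

definition boolean_elem :: "'a \<Rightarrow> bool" where
  "boolean_elem x \<longleftrightarrow> x \<in> carrier M \<and> x \<sqinter> \<sim>x = \<zero>"

lemma boolean_elem_join_neg:
  assumes "boolean_elem x"
  shows "x \<squnion> \<sim>x = \<one>"
  using assms neg_meet[of x "\<sim>x"] join_comm[of x "\<sim>x"] by (simp add: boolean_elem_def)

lemma boolean_elem_zero: "boolean_elem \<zero>"
  and boolean_elem_one: "boolean_elem \<one>"
  by (simp_all add: boolean_elem_def)

lemma boolean_elem_neg: "boolean_elem x \<Longrightarrow> boolean_elem (\<sim>x)"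
  by (simp add: boolean_elem_def meet_comm)

lemma meet_neg_eq_zero_if_le:
  assumes "boolean_elem a" "b \<in> carrier M" "a \<preceq> b"
  shows "a \<sqinter> \<sim>b = \<zero>"
proof -
  have "\<sim>b \<sqinter> a \<preceq> \<sim>a \<sqinter> a"
    using assms neg_antimono meet_mono by (simp add: boolean_elem_def)
  then show ?thesis
    using assms meet_comm le_zero_iff by (simp add: boolean_elem_def)
qed

lemma boolean_elem_meet:
  assumes "boolean_elem x" "boolean_elem y"
  shows "boolean_elem (x \<sqinter> y)"
proof -
  have C: "x \<in> carrier M" "y \<in> carrier M"
    using assms by (simp_all add: boolean_elem_def)
  have "x \<sqinter> y \<sqinter> \<sim>(x \<sqinter> y) = x \<sqinter> y \<sqinter> \<sim>x \<squnion> x \<sqinter> y \<sqinter> \<sim>y"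
    using C by (simp add: neg_meet meet_join_distrib)
  also have "\<dots> = \<zero>"
  proof -
    have "x \<sqinter> y \<sqinter> \<sim>x \<preceq> x \<sqinter> \<sim>x" "x \<sqinter> y \<sqinter> \<sim>y \<preceq> y \<sqinter> \<sim>y"
      using C meet_mono[OF _ _ _ meet_le1] meet_mono[OF _ _ _ meet_le2] by simp_all
    then show ?thesis
      using assms C le_zero_iff by (simp add: boolean_elem_def)
  qed
  finally show ?thesis
    using C by (simp add: boolean_elem_def)
qed

lemma boolean_elem_join:
  assumes "boolean_elem x" "boolean_elem y"
  shows "boolean_elem (x \<squnion> y)"
proof -
  have "boolean_elem (\<sim>(\<sim>x \<sqinter> \<sim>y))"
    using assms by (intro boolean_elem_neg boolean_elem_meet)
  moreover have "\<sim>(\<sim>x \<sqinter> \<sim>y) = x \<squnion> y"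
    using assms by (simp add: boolean_elem_def neg_meet)
  ultimately show ?thesis
    by simp
qed

end

locale mpm_algebra =
  fixes M :: "'a mpm"
  assumes mpm: "mpm_alg M"

sublocale mpm_algebra \<subseteq> de_morgan_algebra
  using mpm by unfold_locales (simp add: mpm_alg_def)

context mpm_algebra
begin

lemma pc_closed [simp]: "x \<in> carrier M \<Longrightarrow> pc M x \<in> carrier M"
  and meet_pc [simp]: "x \<in> carrier M \<Longrightarrow> x \<sqinter> pc M x = \<zero>"
  and le_pcI: "x \<in> carrier M \<Longrightarrow> y \<in> carrier M \<Longrightarrow> x \<sqinter> y = \<zero> \<Longrightarrow> y \<preceq> pc M x"
  using mpm unfolding mpm_alg_def by blast+

lemma pc_eq_complement:
  assumes "x \<in> carrier M" "y \<in> carrier M" "x \<sqinter> y = \<zero>" "x \<squnion> y = \<one>"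
  shows "pc M x = y"
proof (rule le_antisym)
  have "pc M x = pc M x \<sqinter> (x \<squnion> y)"
    using assms by simp
  also have "\<dots> = pc M x \<sqinter> y"
    using assms meet_join_distrib[of "pc M x" x y] meet_comm[of "pc M x" x] by simp
  finally show "pc M x \<preceq> y"
    by (simp add: le_def)
  show "y \<preceq> pc M x"
    using assms le_pcI by simp
qed (use assms in simp_all)

lemma pc_boolean_elem: "boolean_elem x \<Longrightarrow> pc M x = \<sim>x"
  by (simp add: pc_eq_complement boolean_elem_join_neg boolean_elem_def)

lemma nabla_closed [simp]: "x \<in> carrier M \<Longrightarrow> nabla M x \<in> carrier M"
  by (simp add: nabla_def)

lemma nabla_eq_self_iff:
  assumes "x \<in> carrier M"
  shows "nabla M x = x \<longleftrightarrow> boolean_elem x"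
proof
  assume "nabla M x = x"
  then have "\<sim>x = \<sim>x \<sqinter> pc M x"
    using assms by (metis nabla_def meet_closed neg_closed pc_closed neg_neg)
  then have "x \<sqinter> \<sim>x = x \<sqinter> pc M x \<sqinter> \<sim>x"
    using assms meet_assoc meet_comm by (metis neg_closed pc_closed)
  then show "boolean_elem x"
    using assms by (simp add: boolean_elem_def)
next
  assume "boolean_elem x"
  then show "nabla M x = x"
    by (simp add: nabla_def pc_boolean_elem boolean_elem_def)
qed

lemma triangle_closed [simp]: "x \<in> carrier M \<Longrightarrow> triangle M x \<in> carrier M"
  by (simp add: triangle_def)

lemma triangle_eq: "x \<in> carrier M \<Longrightarrow> triangle M x = x \<sqinter> pc M (\<sim>x)"
  by (simp add: triangle_def nabla_def)

lemma neg_triangle: "x \<in> carrier M \<Longrightarrow> \<sim>triangle M x = nabla M (\<sim>x)"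
  by (simp add: triangle_def)

lemma le_triangle:
  assumes "boolean_elem a" "x \<in> carrier M" "a \<preceq> x"
  shows "a \<preceq> triangle M x"
proof -
  have "\<sim>x \<sqinter> a = \<zero>"
    using assms meet_neg_eq_zero_if_le meet_comm by (simp add: boolean_elem_def)
  then have "a \<preceq> pc M (\<sim>x)"
    using assms le_pcI by (simp add: boolean_elem_def)
  then show ?thesis
    using assms le_meetI by (simp add: triangle_eq boolean_elem_def)
qed

lemma le_triangle_self_iff:
  assumes "a \<in> carrier M"
  shows "a \<preceq> triangle M a \<longleftrightarrow> boolean_elem a"
proof
  assume "a \<preceq> triangle M a"
  then have "a \<preceq> pc M (\<sim>a)"
    using assms le_trans[OF _ _ _ _ meet_le2] by (simp add: triangle_eq)
  then have "a \<sqinter> \<sim>a \<preceq> pc M (\<sim>a) \<sqinter> \<sim>a"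
    using assms meet_mono by simp
  then show "boolean_elem a"
    using assms meet_comm[of "pc M (\<sim>a)" "\<sim>a"] le_zero_iff by (simp add: boolean_elem_def)
qed (use assms le_triangle le_refl in simp)

end

lemma Kset_restrict_carrier:
  assumes "S \<subseteq> carrier M" "\<forall>x\<in>S. ts x = t x"
  shows "Kset (M\<lparr>carrier := S\<rparr>) ts = Kset M t \<inter> S"
  using assms by (auto simp: Kset_def nabla_def)

locale ck_algebra =
  fixes k :: nat and M :: "'a mpm" and t :: "'a \<Rightarrow> 'a"
  assumes ck: "ck_alg k M t"

sublocale ck_algebra \<subseteq> mpm_algebra
  using ck by unfold_locales (simp add: ck_alg_def)

context ck_algebra
begin

lemma k_pos: "k \<ge> 1"
  and aut_iter_period: "x \<in> carrier M \<Longrightarrow> (t ^^ k) x = x"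
  using ck by (simp_all add: ck_alg_def)

lemma aut_closed [simp]: "x \<in> carrier M \<Longrightarrow> t x \<in> carrier M"
  using ck by (auto simp: ck_alg_def mpm_aut_def dest: bij_betw_apply)

lemma aut_meet: "x \<in> carrier M \<Longrightarrow> y \<in> carrier M \<Longrightarrow> t (x \<sqinter> y) = t x \<sqinter> t y"
  and aut_join: "x \<in> carrier M \<Longrightarrow> y \<in> carrier M \<Longrightarrow> t (x \<squnion> y) = t x \<squnion> t y"
  and aut_neg: "x \<in> carrier M \<Longrightarrow> t (\<sim>x) = \<sim>t x"
  and aut_zero: "t \<zero> = \<zero>"
  and aut_one: "t \<one> = \<one>"
  using ck by (simp_all add: ck_alg_def mpm_aut_def)

lemma aut_iter_closed [simp]: "x \<in> carrier M \<Longrightarrow> (t ^^ n) x \<in> carrier M"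
  by (induction n) auto

lemma aut_mono: "x \<in> carrier M \<Longrightarrow> y \<in> carrier M \<Longrightarrow> x \<preceq> y \<Longrightarrow> t x \<preceq> t y"
  unfolding le_def by (metis aut_meet)

lemma aut_iter_mono: "x \<in> carrier M \<Longrightarrow> y \<in> carrier M \<Longrightarrow> x \<preceq> y \<Longrightarrow> (t ^^ n) x \<preceq> (t ^^ n) y"
  by (induction n) (auto intro: aut_mono)

lemma le_aut_iter_if_fixed:
  assumes "a \<in> carrier M" "x \<in> carrier M" "t a = a" "a \<preceq> x"
  shows "a \<preceq> (t ^^ n) x"
proof (induction n)
  case (Suc n)
  then show ?case
    using assms aut_mono[of a "(t ^^ n) x"] by simp
qed (use assms in simp)

lemma aut_fixed_if_le:
  assumes "a \<in> carrier M" "a \<preceq> t a"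
  shows "t a = a"
proof -
  have "t a \<preceq> (t ^^ Suc n) a" for n
  proof (induction n)
    case (Suc n)
    have "(t ^^ Suc n) a \<preceq> (t ^^ Suc n) (t a)"
      using assms by (intro aut_iter_mono) simp_all
    with Suc show ?case
      using assms le_trans[of "t a" "(t ^^ Suc n) a"] by (simp add: funpow_swap1)
  qed (use assms le_refl in simp)
  moreover obtain m where "k = Suc m"
    using k_pos by (cases k) auto
  ultimately have "t a \<preceq> a"
    using assms aut_iter_period by metis
  with assms show ?thesis
    by (simp add: le_antisym)
qed

lemma Kset_eq: "Kset M t = {x. boolean_elem x \<and> t x = x}"
proof -
  have "x = nabla M x \<longleftrightarrow> boolean_elem x" if "x \<in> carrier M" for x
    using nabla_eq_self_iff[OF that] by auto
  then show ?thesis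
    unfolding Kset_def by (auto simp: boolean_elem_def)
qed

lemma mpm_subalg_Kset: "mpm_subalg M (Kset M t)"
  unfolding mpm_subalg_def
proof (intro conjI ballI)
  show "Kset M t \<subseteq> carrier M"
    by (auto simp: Kset_def)
  show "\<zero> \<in> Kset M t" "\<one> \<in> Kset M t"
    by (simp_all add: Kset_eq boolean_elem_zero boolean_elem_one aut_zero aut_one)
  fix x y
  assume "x \<in> Kset M t" "y \<in> Kset M t"
  then have x: "boolean_elem x" "t x = x" "x \<in> carrier M" and y: "boolean_elem y" "t y = y" "y \<in> carrier M"
    by (simp_all add: Kset_eq boolean_elem_def)
  show "x \<sqinter> y \<in> Kset M t" "x \<squnion> y \<in> Kset M t"
    using x y by (simp_all add: Kset_eq boolean_elem_meet boolean_elem_join aut_meet aut_join)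
next
  fix x
  assume "x \<in> Kset M t"
  then have x: "boolean_elem x" "t x = x" "x \<in> carrier M"
    by (simp_all add: Kset_eq boolean_elem_def)
  then show "\<sim>x \<in> Kset M t" "pc M x \<in> Kset M t"
    by (simp_all add: Kset_eq boolean_elem_neg aut_neg pc_boolean_elem)
qed

lemma boolean_alg_Kset: "boolean_alg (M\<lparr>carrier := Kset M t\<rparr>)"
  unfolding boolean_alg_def
proof
  show "bdl (M\<lparr>carrier := Kset M t\<rparr>)"
    using mpm_subalg_Kset by (intro bdl_restrict_carrier) (simp_all add: mpm_subalg_def)
  have "\<sim>x \<in> Kset M t \<and> x \<sqinter> \<sim>x = \<zero> \<and> x \<squnion> \<sim>x = \<one>" if "x \<in> Kset M t" for x
    using that mpm_subalg_Kset boolean_elem_join_neg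
    by (simp add: mpm_subalg_def Kset_eq boolean_elem_def)
  then show "\<forall>x\<in>carrier (M\<lparr>carrier := Kset M t\<rparr>). \<exists>y\<in>carrier (M\<lparr>carrier := Kset M t\<rparr>).
      meet (M\<lparr>carrier := Kset M t\<rparr>) x y = zero (M\<lparr>carrier := Kset M t\<rparr>)
      \<and> join (M\<lparr>carrier := Kset M t\<rparr>) x y = one (M\<lparr>carrier := Kset M t\<rparr>)"
    by auto
qed

lemma c_filter_princ_filter_iff:
  assumes "a \<in> carrier M"
  shows "c_filter M t (princ_filter M a) \<longleftrightarrow> a \<in> Kset M t"
proof
  assume "c_filter M t (princ_filter M a)"
  moreover have "a \<in> princ_filter M a"
    using assms le_refl by (simp add: princ_filter_def)
  ultimately have "a \<preceq> t a" "a \<preceq> triangle M a"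
    by (auto simp: c_filter_def princ_filter_def)
  then show "a \<in> Kset M t"
    using assms aut_fixed_if_le le_triangle_self_iff by (simp add: Kset_eq)
next
  assume "a \<in> Kset M t"
  then have "boolean_elem a" "t a = a"
    by (simp_all add: Kset_eq)
  then show "c_filter M t (princ_filter M a)"
    using assms lattice_filter_princ_filter le_triangle le_aut_iter_if_fixed[of a _ 1]
    by (auto simp: c_filter_def princ_filter_def)
qed

lemma cds_princ_filter:
  assumes "a \<in> Kset M t"
  shows "cds k M t (princ_filter M a)"
proof -
  have a: "boolean_elem a" "t a = a" "a \<in> carrier M"
    using assms by (auto simp: Kset_eq boolean_elem_def)
  have "y \<in> princ_filter M a"
    if "x \<in> princ_filter M a" "y \<in> carrier M" "cimp k M t x y \<in> princ_filter M a" for x y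
  proof -
    have x: "x \<in> carrier M" "a \<preceq> x"
      and a_le: "a \<preceq> foldr (join M) [nabla M (\<sim>(t ^^ i) x). i \<leftarrow> [1..<Suc k]] y"
      using that by (simp_all add: princ_filter_def cimp_def del: upt_Suc)
    have "a \<sqinter> nabla M (\<sim>(t ^^ i) x) = \<zero>" for i
    proof -
      have "a \<preceq> triangle M ((t ^^ i) x)"
        using a x le_aut_iter_if_fixed by (intro le_triangle) simp_all
      then have "a \<sqinter> \<sim>triangle M ((t ^^ i) x) = \<zero>"
        using a x by (intro meet_neg_eq_zero_if_le) simp_all
      then show ?thesis
        using x by (simp add: neg_triangle)
    qed
    then have "a \<preceq> y"
      using a x \<open>y \<in> carrier M\<close> by (intro le_foldr_join_disjointD[OF _ _ _ _ a_le]) auto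
    with \<open>y \<in> carrier M\<close> show "y \<in> princ_filter M a"
      by (simp add: princ_filter_def)
  qed
  moreover have "princ_filter M a \<subseteq> carrier M" "\<one> \<in> princ_filter M a"
    using a le_one by (auto simp: princ_filter_def)
  ultimately show ?thesis
    unfolding cds_def by blast
qed

lemma princ_filter_subset_cds:
  assumes "a \<in> Kset M t" "cds k M t D" "a \<in> D"
  shows "princ_filter M a \<subseteq> D"
proof
  fix x
  assume "x \<in> princ_filter M a"
  then have x: "x \<in> carrier M" "a \<preceq> x"
    by (simp_all add: princ_filter_def)
  have a: "boolean_elem a" "t a = a" "a \<in> carrier M"
    using assms by (auto simp: Kset_eq boolean_elem_def)
  let ?xs = "[nabla M (\<sim>(t ^^ i) a). i \<leftarrow> [1..<Suc k]]"
  let ?c = "foldr (join M) ?xs x"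
  have xs: "set ?xs \<subseteq> carrier M"
    using a by auto
  then have c: "?c \<in> carrier M"
    using x(1) by (rule foldr_join_closed)
  have "nabla M (\<sim>(t ^^ 1) a) \<in> set ?xs"
    unfolding set_map by (rule imageI) (use k_pos in auto)
  moreover have "nabla M (\<sim>a) = \<sim>a"
    using a boolean_elem_neg nabla_eq_self_iff by simp
  ultimately have "\<sim>a \<in> set ?xs"
    using a(2) by simp
  then have "\<sim>a \<preceq> ?c"
    by (rule le_foldr_join_elem[OF xs x(1)])
  moreover have "a \<preceq> ?c"
    using le_trans[OF a(3) x(1) c x(2) le_foldr_join_base[OF xs x(1)]] .
  ultimately have "\<one> \<preceq> ?c"
    using a c join_leI[of a "\<sim>a" ?c] boolean_elem_join_neg by simp
  then have "?c = \<one>"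
    using c le_antisym le_one by simp
  moreover have "\<one> \<in> D" and D_mp: "\<forall>u\<in>D. \<forall>y\<in>carrier M. cimp k M t u y \<in> D \<longrightarrow> y \<in> D"
    using assms(2) unfolding cds_def by blast+
  ultimately have "cimp k M t a x \<in> D"
    unfolding cimp_def by simp
  with D_mp assms(3) x(1) show "x \<in> D"
    by blast
qed

lemma Dgen_eq_princ_filter:
  assumes "a \<in> Kset M t"
  shows "Dgen k M t a = princ_filter M a"
proof (rule antisym)
  have "a \<in> princ_filter M a"
    using assms le_refl by (simp add: princ_filter_def Kset_def)
  then show "Dgen k M t a \<subseteq> princ_filter M a"
    using assms cds_princ_filter unfolding Dgen_def by blast
  show "princ_filter M a \<subseteq> Dgen k M t a"
    using assms princ_filter_subset_cds unfolding Dgen_def by blast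
qed

end

theorem proposition4p4:
  fixes k :: nat and M :: "'a mpm" and t :: "'a \<Rightarrow> 'a"
  assumes "k \<ge> 1" and "ck_alg k M t"
  shows "mpm_subalg M (Kset M t)
       \<and> boolean_alg (M\<lparr>carrier := Kset M t\<rparr>)
       \<and> (\<forall>S ts. ck_subalg k M t S ts \<longrightarrow> Kset (M\<lparr>carrier := S\<rparr>) ts = Kset M t \<inter> S)
       \<and> (\<forall>a\<in>carrier M. c_filter M t (princ_filter M a) \<longleftrightarrow> a \<in> Kset M t)
       \<and> (\<forall>a\<in>Kset M t. Dgen k M t a = princ_filter M a)"
proof -
  interpret ck_algebra k M t
    using assms(2) by unfold_locales
  have "Kset (M\<lparr>carrier := S\<rparr>) ts = Kset M t \<inter> S" if "ck_subalg k M t S ts" for S ts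
    using that by (intro Kset_restrict_carrier) (simp_all add: ck_subalg_def mpm_subalg_def)
  then show ?thesis
    using mpm_subalg_Kset boolean_alg_Kset c_filter_princ_filter_iff Dgen_eq_princ_filter
    by blast
qed

end
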